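(* Let $k$ be a field of characteristic zero, let $S=U(\mathfrak{sl}_2(k))$ be the enveloping algebra with standard basis $E,F,H$ of $\mathfrak{sl}_2(k)$ ($[H,E]=2E$, $[H,F]=-2F$, $[E,F]=H$), let $R=k[E]\subseteq S$ be the subalgebra generated by $E$, and let $f$ be the inclusion. Then the correspondence $\mathbf r\colon\operatorname{Spec} S\to\operatorname{Spec} R$ is not continuous; specifically, for $I=RE$, the set $\mathbf r^{[-1]}V_R(I)$ is not closed in $\operatorname{Spec} S$.
   Context: $\operatorname{Spec}$ carries the Zariski topology, closed sets $V_A(X)=\{P: P\supseteq X\}$. For $P\in\operatorname{Spec} S$, $\mathbf rP$ is the set of prime ideals of $R$ minimal over $P\cap R$; $\mathbf r^{[-1]}V=\{P\in\operatorname{Spec} S:\mathbf rP\subseteq V\}$; $\mathbf r$ is continuous if $\mathbf r^{[-1]}V$ is closed for all closed $V\subseteq\operatorname{Spec} R$. *)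

theory Defs
  imports "HOL-Algebra.Algebra"
begin

datatype gen = gE | gF | gH

text \<open>Free associative unital k-algebra on the letters E, F, H: finitely supported
  functions on words, with concatenation convolution as product.\<close>
definition free_alg :: "(gen list \<Rightarrow> 'k::field) ring" where
  "free_alg = \<lparr> carrier = {p. finite {w. p w \<noteq> 0}},
                monoid.mult = (\<lambda>p q w. \<Sum>i\<le>length w. p (take i w) * q (drop i w)),
                monoid.one = (\<lambda>w. if w = [] then 1 else 0),
                ring.zero = (\<lambda>w. 0),
                ring.add = (\<lambda>p q w. p w + q w) \<rparr>"

definition fa_gen :: "gen \<Rightarrow> gen list \<Rightarrow> 'k::field" where
  "fa_gen g = (\<lambda>w. if w = [g] then 1 else 0)"

definition sl2_rels :: "(gen list \<Rightarrow> 'k::field) set" where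
  "sl2_rels = (let A = (free_alg :: (gen list \<Rightarrow> 'k) ring);
                   E = fa_gen gE; F = fa_gen gF; H = fa_gen gH in
     { (H \<otimes>\<^bsub>A\<^esub> E \<ominus>\<^bsub>A\<^esub> E \<otimes>\<^bsub>A\<^esub> H) \<ominus>\<^bsub>A\<^esub> (E \<oplus>\<^bsub>A\<^esub> E),
       (H \<otimes>\<^bsub>A\<^esub> F \<ominus>\<^bsub>A\<^esub> F \<otimes>\<^bsub>A\<^esub> H) \<oplus>\<^bsub>A\<^esub> (F \<oplus>\<^bsub>A\<^esub> F),
       (E \<otimes>\<^bsub>A\<^esub> F \<ominus>\<^bsub>A\<^esub> F \<otimes>\<^bsub>A\<^esub> E) \<ominus>\<^bsub>A\<^esub> H })"

definition sl2_ideal :: "(gen list \<Rightarrow> 'k::field) set" where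
  "sl2_ideal = genideal (free_alg :: (gen list \<Rightarrow> 'k) ring) sl2_rels"

definition U_sl2 :: "(gen list \<Rightarrow> 'k::field) set ring" where
  "U_sl2 = free_alg Quot sl2_ideal"

definition U_E :: "(gen list \<Rightarrow> 'k::field) set" where
  "U_E = sl2_ideal +>\<^bsub>(free_alg :: (gen list \<Rightarrow> 'k) ring)\<^esub> fa_gen gE"

text \<open>R = k[E], the subalgebra of S generated by E: classes of noncommutative
  polynomials involving only the letter E; as a ring, a substructure of S
  (so f is the inclusion).\<close>
definition kE_sub :: "(gen list \<Rightarrow> 'k::field) set ring" where
  "kE_sub = U_sl2 \<lparr> carrier :=
     {x. \<exists>p \<in> carrier (free_alg :: (gen list \<Rightarrow> 'k) ring).
           (\<forall>w. p w \<noteq> 0 \<longrightarrow> set w \<subseteq> {gE}) \<and>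
           x = sl2_ideal +>\<^bsub>(free_alg :: (gen list \<Rightarrow> 'k) ring)\<^esub> p} \<rparr>"

definition spec :: "('a, 'b) ring_scheme \<Rightarrow> 'a set set" where
  "spec A = {P. ideal P A \<and> P \<noteq> carrier A \<and>
     (\<forall>I J. ideal I A \<longrightarrow> ideal J A \<longrightarrow> (\<forall>a\<in>I. \<forall>b\<in>J. a \<otimes>\<^bsub>A\<^esub> b \<in> P)
            \<longrightarrow> I \<subseteq> P \<or> J \<subseteq> P)}"

definition zar_V :: "('a, 'b) ring_scheme \<Rightarrow> 'a set \<Rightarrow> 'a set set" where
  "zar_V A Y = {Q. Q \<in> spec A \<and> Y \<subseteq> Q}"

definition spec_closed :: "('a, 'b) ring_scheme \<Rightarrow> 'a set set \<Rightarrow> bool" where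
  "spec_closed A Z \<longleftrightarrow> (\<exists>Y. Y \<subseteq> carrier A \<and> Z = zar_V A Y)"

text \<open>For a subring R of S (R a substructure of S): r P = primes of R minimal over P \<inter> R.\<close>
definition corr_r :: "('a, 'b) ring_scheme \<Rightarrow> ('a, 'c) ring_scheme \<Rightarrow> 'a set \<Rightarrow> 'a set set" where
  "corr_r S R P = {Q \<in> spec R. P \<inter> carrier R \<subseteq> Q \<and>
      (\<forall>Q'\<in>spec R. P \<inter> carrier R \<subseteq> Q' \<longrightarrow> Q' \<subseteq> Q \<longrightarrow> Q' = Q)}"

definition corr_preim :: "('a, 'b) ring_scheme \<Rightarrow> ('a, 'c) ring_scheme \<Rightarrow> 'a set set \<Rightarrow> 'a set set" where
  "corr_preim S R V = {P \<in> spec S. corr_r S R P \<subseteq> V}"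

definition corr_continuous :: "('a, 'b) ring_scheme \<Rightarrow> ('a, 'c) ring_scheme \<Rightarrow> bool" where
  "corr_continuous S R \<longleftrightarrow>
     (\<forall>V. spec_closed R V \<longrightarrow> spec_closed S (corr_preim S R V))"

end

theory Submission
  imports Defs "HOL-Computational_Algebra.Polynomial"
begin

(* For l in N let L(l) be the simple S-module of dimension l + 1 and P_l its annihilator, a
   primitive and hence prime ideal of S.  In the basis x_0, ..., x_l of L(l) the element E lowers
   the index, so E^(l+1) lies in P_l; since R = k[E] is commutative, every prime of R containing
   P_l \<inter> R contains E, i.e. P_l lies in r^[-1] V(RE).
   All L(l) sit inside the Verma modules M(c), on which the matrix coefficients of an element of
   S are polynomials in the highest weight c.  Hence an element outside Q = \<Inter>_l P_l lies
   outside P_l for all large l, which makes Q prime.  A nonzero polynomial in E of degree m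
   does not kill x_m in L(m), so Q \<inter> R = 0 and r Q = {0}, which does not contain E.
   A closed set containing every P_l contains Q, so r^[-1] V(RE) is not closed. *)

type_synonym 'k ncpoly = "gen list \<Rightarrow> 'k"


section \<open>The free algebra on \<open>E\<close>, \<open>F\<close>, \<open>H\<close>\<close>

lemma conv_nonzero_subset:
  fixes p q :: "'a list \<Rightarrow> 'k::semiring_0"
  shows "{w. (\<Sum>i\<le>length w. p (take i w) * q (drop i w)) \<noteq> 0}
           \<subseteq> (\<lambda>(u, v). u @ v) ` ({u. p u \<noteq> 0} \<times> {v. q v \<noteq> 0})"
proof
  fix w assume "w \<in> {w. (\<Sum>i\<le>length w. p (take i w) * q (drop i w)) \<noteq> 0}"
  then obtain i where "p (take i w) * q (drop i w) \<noteq> 0"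
    by (metis (mono_tags, lifting) mem_Collect_eq sum.neutral)
  then show "w \<in> (\<lambda>(u, v). u @ v) ` ({u. p u \<noteq> 0} \<times> {v. q v \<noteq> 0})"
    by (intro image_eqI[where x = "(take i w, drop i w)"]) auto
qed

lemma conv_assoc:
  fixes p q r :: "'a list \<Rightarrow> 'k::semiring_0"
  shows "(\<Sum>i\<le>length w. (\<Sum>j\<le>length (take i w). p (take j (take i w)) * q (drop j (take i w))) * r (drop i w))
       = (\<Sum>i\<le>length w. p (take i w) * (\<Sum>j\<le>length (drop i w). q (take j (drop i w)) * r (drop j (drop i w))))"
proof -
  define n where "n = length w"
  define g where "g a m = p (take a w) * q (take m (drop a w)) * r (drop (a + m) w)" for a m
  have "(\<Sum>i\<le>length w. (\<Sum>j\<le>length (take i w). p (take j (take i w)) * q (drop j (take i w))) * r (drop i w))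
      = (\<Sum>i\<le>n. \<Sum>j\<le>i. g j (i - j))"
    unfolding n_def g_def
    by (intro sum.cong refl) (auto simp: sum_distrib_right min_def take_drop intro!: sum.cong)
  also have "\<dots> = (\<Sum>(i, j)\<in>{(i, j). i + j \<le> n}. g i j)"
    by (rule sum.triangle_reindex_eq[symmetric])
  also have "\<dots> = (\<Sum>i\<le>n. \<Sum>j\<le>n - i. g i j)"
  proof -
    have "{(i, j). i + j \<le> n} = Sigma {..n} (\<lambda>i. {..n - i})" by auto
    then show ?thesis by (simp add: sum.Sigma)
  qed
  also have "\<dots> = (\<Sum>i\<le>length w. p (take i w) * (\<Sum>j\<le>length (drop i w). q (take j (drop i w)) * r (drop j (drop i w))))"
    unfolding n_def g_def
    by (intro sum.cong refl) (auto simp: sum_distrib_left mult.assoc add.commute)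
  finally show ?thesis .
qed

lemma free_alg_simps:
  "carrier free_alg = {p. finite {w. p w \<noteq> 0}}"
  "p \<otimes>\<^bsub>free_alg\<^esub> q = (\<lambda>w. \<Sum>i\<le>length w. p (take i w) * q (drop i w))"
  "\<one>\<^bsub>free_alg\<^esub> = (\<lambda>w. if w = [] then 1 else 0)"
  "\<zero>\<^bsub>free_alg\<^esub> = (\<lambda>w. 0)"
  "p \<oplus>\<^bsub>free_alg\<^esub> q = (\<lambda>w. p w + q w)"
  by (simp_all add: free_alg_def)

lemma ring_free_alg: "ring (free_alg :: 'k::field ncpoly ring)"
proof (rule ringI)
  show "abelian_group (free_alg :: 'k ncpoly ring)"
  proof (rule abelian_groupI)
    fix x y :: "'k ncpoly"
    assume "x \<in> carrier free_alg" "y \<in> carrier free_alg"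
    then show "x \<oplus>\<^bsub>free_alg\<^esub> y \<in> carrier free_alg"
      by (auto simp: free_alg_simps intro: finite_subset[of _ "{w. x w \<noteq> 0} \<union> {w. y w \<noteq> 0}"])
  next
    fix x :: "'k ncpoly"
    assume "x \<in> carrier free_alg"
    then show "\<exists>y\<in>carrier free_alg. y \<oplus>\<^bsub>free_alg\<^esub> x = \<zero>\<^bsub>free_alg\<^esub>"
      by (intro bexI[of _ "\<lambda>w. - x w"]) (auto simp: free_alg_simps)
  qed (auto simp: free_alg_simps add.assoc add.commute)
  show "monoid (free_alg :: 'k ncpoly ring)"
  proof (rule monoidI)
    fix x y :: "'k ncpoly"
    assume "x \<in> carrier free_alg" "y \<in> carrier free_alg"
    then show "x \<otimes>\<^bsub>free_alg\<^esub> y \<in> carrier free_alg"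
      using conv_nonzero_subset[of x y] by (auto simp: free_alg_simps intro: finite_subset)
  next
    show "\<one>\<^bsub>free_alg\<^esub> \<in> carrier (free_alg :: 'k ncpoly ring)"
      by (auto simp: free_alg_simps intro: finite_subset[of _ "{[]}"])
  next
    fix x :: "'k ncpoly"
    have "(\<Sum>i\<le>length w. (if take i w = [] then 1 else 0) * x (drop i w))
          = (\<Sum>i\<in>{0}. (if take i w = [] then 1 else 0) * x (drop i w))" for w
      by (intro sum.mono_neutral_right) auto
    moreover have "(\<Sum>i\<le>length w. x (take i w) * (if drop i w = [] then 1 else 0))
          = (\<Sum>i\<in>{length w}. x (take i w) * (if drop i w = [] then 1 else 0))" for w
      by (intro sum.mono_neutral_right) auto
    ultimately show "\<one>\<^bsub>free_alg\<^esub> \<otimes>\<^bsub>free_alg\<^esub> x = x" "x \<otimes>\<^bsub>free_alg\<^esub> \<one>\<^bsub>free_alg\<^esub> = x"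
      by (simp_all add: free_alg_simps)
  next
    fix x y z :: "'k ncpoly"
    show "x \<otimes>\<^bsub>free_alg\<^esub> y \<otimes>\<^bsub>free_alg\<^esub> z = x \<otimes>\<^bsub>free_alg\<^esub> (y \<otimes>\<^bsub>free_alg\<^esub> z)"
      unfolding free_alg_simps using conv_assoc by (intro ext) blast
  qed
qed (auto simp: free_alg_simps distrib_left distrib_right sum.distrib)

lemma free_alg_a_inv:
  assumes "p \<in> carrier (free_alg :: 'k::field ncpoly ring)"
  shows "\<ominus>\<^bsub>free_alg\<^esub> p = (\<lambda>w. - p w)"
proof -
  interpret ring "free_alg :: 'k ncpoly ring" by (rule ring_free_alg)
  show ?thesis
    using assms by (intro minus_equality) (auto simp: free_alg_simps)
qed

definition fa_word :: "gen list \<Rightarrow> 'k::field ncpoly" where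
  "fa_word u = (\<lambda>w. if w = u then 1 else 0)"

lemma fa_word_carrier: "fa_word u \<in> carrier free_alg"
  by (auto simp: free_alg_simps fa_word_def intro: finite_subset[of _ "{u}"])

lemma fa_word_nonzero: "(fa_word u :: 'k::field ncpoly) \<noteq> (\<lambda>_. 0)"
proof
  assume "fa_word u = (\<lambda>_. 0 :: 'k)"
  then have "fa_word u u = (0 :: 'k)" by simp
  then show False by (simp add: fa_word_def)
qed

lemma fa_gen_eq_fa_word: "fa_gen g = fa_word [g]"
  by (simp add: fa_gen_def fa_word_def)

lemma free_alg_one_eq_fa_word: "\<one>\<^bsub>free_alg\<^esub> = fa_word []"
  by (simp add: free_alg_simps fa_word_def)

lemma fa_word_mult: "fa_word u \<otimes>\<^bsub>free_alg\<^esub> fa_word v = fa_word (u @ v)"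
proof
  fix w
  have "(take i w = u \<and> drop i w = v) \<longleftrightarrow> (w = u @ v \<and> i = length u)" if "i \<le> length w" for i
    using that by (auto simp: append_eq_conv_conj)
  then have "(fa_word u \<otimes>\<^bsub>free_alg\<^esub> fa_word v) w
             = (\<Sum>i\<le>length w. if w = u @ v \<and> i = length u then 1 else 0)"
    unfolding free_alg_simps fa_word_def by (intro sum.cong refl) auto
  also have "\<dots> = fa_word (u @ v) w"
    by (simp add: fa_word_def)
  finally show "(fa_word u \<otimes>\<^bsub>free_alg\<^esub> fa_word v) w = fa_word (u @ v) w" .
qed

section \<open>Prime spectra\<close>

lemma (in ring) rcos_mem_image_iff:
  assumes I: "ideal I R" and J: "ideal J R" "I \<subseteq> J" and a: "a \<in> carrier R"
  shows "I +> a \<in> (+>) I ` J \<longleftrightarrow> a \<in> J"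
proof -
  have "(+>) I ` J \<subseteq> carrier (R Quot I)"
    using ideal.Icarr[OF ring_ideal_imp_quot_ideal[OF I J(1)]] by blast
  then have "a \<in> \<Union> ((+>) I ` J) \<longleftrightarrow> I +> a \<in> (+>) I ` J"
    by (rule canonical_proj_vimage_mem_iff[OF I _ a])
  moreover have "\<Union> ((+>) I ` J) = J"
    using ideal_incl_iff[OF I J(1)] J(2) by blast
  ultimately show ?thesis by (simp only:)
qed

lemma (in ring) quot_image_in_spec:
  assumes I: "ideal I R" and J: "ideal J R" "I \<subseteq> J" "\<one> \<notin> J"
    and prime: "\<And>a b. a \<in> carrier R \<Longrightarrow> b \<in> carrier R \<Longrightarrow> a \<notin> J \<Longrightarrow> b \<notin> J \<Longrightarrow>
                  \<exists>u\<in>carrier R. a \<otimes> u \<otimes> b \<notin> J"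
  shows "(+>) I ` J \<in> spec (R Quot I)"
proof -
  let ?P = "(+>) I ` J"
  interpret h: ring_hom_ring R "R Quot I" "(+>) I"
    by (rule ideal.rcos_ring_hom_ring[OF I])
  have lift: "\<exists>a\<in>carrier R. x = I +> a" if "x \<in> carrier (R Quot I)" for x
    using that unfolding FactRing_def A_RCOSETS_def' by simp
  have mem: "I +> a \<in> ?P \<longleftrightarrow> a \<in> J" if "a \<in> carrier R" for a
    using rcos_mem_image_iff[OF I J(1,2) that] .
  have "\<one>\<^bsub>R Quot I\<^esub> \<notin> ?P"
    using mem[OF one_closed] J(3) h.hom_one by simp
  then have "?P \<noteq> carrier (R Quot I)"
    using ring.ring_simprules(6)[OF ideal.quotient_is_ring[OF I]] by blast
  moreover have "A \<subseteq> ?P \<or> B \<subseteq> ?P"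
    if A: "ideal A (R Quot I)" and B: "ideal B (R Quot I)"
      and AB: "\<forall>x\<in>A. \<forall>y\<in>B. x \<otimes>\<^bsub>R Quot I\<^esub> y \<in> ?P" for A B
  proof (rule ccontr)
    assume "\<not> (A \<subseteq> ?P \<or> B \<subseteq> ?P)"
    then obtain x y where x: "x \<in> A" "x \<notin> ?P" and y: "y \<in> B" "y \<notin> ?P" by auto
    obtain a where a: "a \<in> carrier R" "x = I +> a" using lift ideal.Icarr[OF A x(1)] by blast
    obtain b where b: "b \<in> carrier R" "y = I +> b" using lift ideal.Icarr[OF B y(1)] by blast
    have "a \<notin> J" "b \<notin> J"
      using x(2) y(2) a b mem by auto
    then obtain u where u: "u \<in> carrier R" "a \<otimes> u \<otimes> b \<notin> J"
      using prime a(1) b(1) by blast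
    have "x \<otimes>\<^bsub>R Quot I\<^esub> (I +> u) \<in> A"
      using ideal.I_r_closed[OF A x(1)] u h.hom_closed by simp
    then have "x \<otimes>\<^bsub>R Quot I\<^esub> (I +> u) \<otimes>\<^bsub>R Quot I\<^esub> y \<in> ?P"
      using AB y(1) by blast
    also have "x \<otimes>\<^bsub>R Quot I\<^esub> (I +> u) \<otimes>\<^bsub>R Quot I\<^esub> y = I +> (a \<otimes> u \<otimes> b)"
      using a b u by (simp add: h.hom_mult)
    finally show False using mem u a b m_closed by metis
  qed
  ultimately show ?thesis
    unfolding spec_def using ring_ideal_imp_quot_ideal[OF I J(1)] by blast
qed

lemma not_spec_closed_if_Inter_notin:
  assumes "\<And>l. P l \<in> W" "(\<Inter>l. P l) \<in> spec A" "(\<Inter>l. P l) \<notin> W"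
  shows "\<not> spec_closed A W"
proof
  assume "spec_closed A W"
  then obtain Y where W: "W = zar_V A Y"
    unfolding spec_closed_def by blast
  then have "Y \<subseteq> (\<Inter>l. P l)"
    using assms(1) unfolding zar_V_def by blast
  then show False
    using assms(2,3) W unfolding zar_V_def by blast
qed

lemma spec_iff_primeideal:
  assumes "cring R"
  shows "P \<in> spec R \<longleftrightarrow> primeideal P R"
proof
  interpret cring R by fact
  assume P: "P \<in> spec R"
  show "primeideal P R"
  proof (rule divides_ideal_prod_imp_primeideal)
    fix I J assume "ideal I R" "ideal J R" "I \<cdot>\<^bsub>R\<^esub> J \<subseteq> P"
    then show "I \<subseteq> P \<or> J \<subseteq> P"
      using P ideal_prod.prod[of _ I _ J R] unfolding spec_def by blast
  qed (use P in \<open>auto simp: spec_def\<close>)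
next
  assume P: "primeideal P R"
  have "I \<subseteq> P \<or> J \<subseteq> P"
    if I: "ideal I R" and J: "ideal J R" and IJ: "\<forall>a\<in>I. \<forall>b\<in>J. a \<otimes>\<^bsub>R\<^esub> b \<in> P" for I J
  proof (rule ccontr)
    assume "\<not> (I \<subseteq> P \<or> J \<subseteq> P)"
    then obtain a b where "a \<in> I" "a \<notin> P" "b \<in> J" "b \<notin> P" by blast
    then show False
      using primeideal.I_prime[OF P, of a b] ideal.Icarr[OF I] ideal.Icarr[OF J] IJ by blast
  qed
  then show "P \<in> spec R"
    using P primeideal.I_notcarr[OF P] by (auto simp: spec_def primeideal_def)
qed

lemma (in primeideal) pow_mem_imp_mem:
  assumes "x \<in> carrier R" "x [^] (n::nat) \<in> I"
  shows "x \<in> I"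
  using assms(2)
proof (induction n)
  case 0
  then show ?case using one_imp_carrier assms(1) by simp
next
  case (Suc n)
  then show ?case using I_prime[of "x [^] n" x] assms(1) by auto
qed

section \<open>The action of the free algebra on Verma modules\<close>

text \<open>A vector is given by its coordinates \<open>v i\<close> in the basis \<open>x\<^sub>0, x\<^sub>1, \<dots>\<close> of the
  Verma module of highest weight \<open>c\<close>, on which \<open>E x\<^sub>i = i x\<^bsub>i-1\<^esub>\<close>,
  \<open>H x\<^sub>i = (c - 2i) x\<^sub>i\<close> and \<open>F x\<^sub>i = (c - i) x\<^bsub>i+1\<^esub>\<close>. For \<open>c = l \<in> \<nat>\<close> the
  vectors supported in \<open>{0..l}\<close> form the simple module \<open>L(l)\<close>.\<close>

definition sl2_gen_act :: "'k::field \<Rightarrow> gen \<Rightarrow> (nat \<Rightarrow> 'k) \<Rightarrow> nat \<Rightarrow> 'k" where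
  "sl2_gen_act c g v = (case g of
      gE \<Rightarrow> (\<lambda>i. of_nat (Suc i) * v (Suc i))
    | gH \<Rightarrow> (\<lambda>i. (c - 2 * of_nat i) * v i)
    | gF \<Rightarrow> (\<lambda>i. case i of 0 \<Rightarrow> 0 | Suc j \<Rightarrow> (c - of_nat j) * v j))"

primrec sl2_word_act :: "'k::field \<Rightarrow> gen list \<Rightarrow> (nat \<Rightarrow> 'k) \<Rightarrow> nat \<Rightarrow> 'k" where
  "sl2_word_act c [] v = v"
| "sl2_word_act c (g # w) v = sl2_gen_act c g (sl2_word_act c w v)"

definition sl2_act :: "'k::field \<Rightarrow> 'k ncpoly \<Rightarrow> (nat \<Rightarrow> 'k) \<Rightarrow> nat \<Rightarrow> 'k" where
  "sl2_act c p v i = (\<Sum>w | p w \<noteq> 0. p w * sl2_word_act c w v i)"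

lemma sl2_word_act_append: "sl2_word_act c (u @ w) v = sl2_word_act c u (sl2_word_act c w v)"
  by (induction u) auto

lemma sl2_word_act_sum:
  fixes a :: "'x \<Rightarrow> 'k::field"
  shows "sl2_word_act c w (\<lambda>j. \<Sum>x\<in>S. a x * f x j) i = (\<Sum>x\<in>S. a x * sl2_word_act c w (f x) i)"
proof (induction w arbitrary: i)
  case (Cons g w)
  have "sl2_word_act c w (\<lambda>j. \<Sum>x\<in>S. a x * f x j) = (\<lambda>j. \<Sum>x\<in>S. a x * sl2_word_act c w (f x) j)"
    using Cons.IH by (rule ext)
  then have "sl2_word_act c (g # w) (\<lambda>j. \<Sum>x\<in>S. a x * f x j)
             = sl2_gen_act c g (\<lambda>j. \<Sum>x\<in>S. a x * sl2_word_act c w (f x) j)"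
    by simp
  then show ?case
    by (cases g; cases i) (simp_all add: sl2_gen_act_def sum_distrib_left algebra_simps)
qed simp

lemma sl2_word_act_scale: "sl2_word_act c w (\<lambda>i. a * v i) = (\<lambda>i. a * sl2_word_act c w v i)"
  using sl2_word_act_sum[of c w "\<lambda>_. a" "\<lambda>_. v" "{()}"] by (simp add: fun_eq_iff)

lemma sl2_word_act_zero: "sl2_word_act c w (\<lambda>_. 0) = (\<lambda>_. 0)"
  by (induction w) (auto simp: sl2_gen_act_def split: gen.splits nat.splits)

lemma sl2_act_eq_sum:
  assumes "finite S" "{w. p w \<noteq> 0} \<subseteq> S"
  shows "sl2_act c p v i = (\<Sum>w\<in>S. p w * sl2_word_act c w v i)"
  unfolding sl2_act_def using assms by (intro sum.mono_neutral_left) auto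

lemma sl2_act_fa_word: "sl2_act c (fa_word u) v = sl2_word_act c u v"
proof
  fix i
  have "sl2_act c (fa_word u) v i = (\<Sum>w\<in>{u}. fa_word u w * sl2_word_act c w v i)"
    by (rule sl2_act_eq_sum) (auto simp: fa_word_def)
  then show "sl2_act c (fa_word u) v i = sl2_word_act c u v i"
    by (simp add: fa_word_def)
qed

lemma sl2_act_zero_vec: "sl2_act c p (\<lambda>_. 0) = (\<lambda>_. 0)"
  by (simp add: sl2_act_def sl2_word_act_zero fun_eq_iff)

lemma sl2_act_add:
  assumes "p \<in> carrier free_alg" "q \<in> carrier free_alg"
  shows "sl2_act c (p \<oplus>\<^bsub>free_alg\<^esub> q) v i = sl2_act c p v i + sl2_act c q v i"
proof -
  let ?S = "{w. p w \<noteq> 0} \<union> {w. q w \<noteq> 0}"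
  have S: "finite ?S" using assms by (simp add: free_alg_simps)
  have "sl2_act c (p \<oplus>\<^bsub>free_alg\<^esub> q) v i = (\<Sum>w\<in>?S. (p w + q w) * sl2_word_act c w v i)"
    by (subst sl2_act_eq_sum[OF S]) (auto simp: free_alg_simps)
  also have "\<dots> = sl2_act c p v i + sl2_act c q v i"
    by (simp add: distrib_right sum.distrib sl2_act_eq_sum[OF S])
  finally show ?thesis .
qed

lemma sl2_act_a_inv:
  assumes "p \<in> carrier free_alg"
  shows "sl2_act c (\<ominus>\<^bsub>free_alg\<^esub> p) v i = - sl2_act c p v i"
  using assms by (simp add: free_alg_a_inv sl2_act_def sum_negf)

lemma sl2_act_minus:
  assumes "p \<in> carrier free_alg" "q \<in> carrier free_alg"
  shows "sl2_act c (p \<ominus>\<^bsub>free_alg\<^esub> q) v i = sl2_act c p v i - sl2_act c q v i"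
proof -
  interpret ring "free_alg :: 'k::field ncpoly ring" by (rule ring_free_alg)
  show ?thesis using assms by (simp add: a_minus_def sl2_act_add sl2_act_a_inv)
qed

lemma sl2_act_mult:
  assumes "p \<in> carrier free_alg" "q \<in> carrier free_alg"
  shows "sl2_act c (p \<otimes>\<^bsub>free_alg\<^esub> q) v = sl2_act c p (sl2_act c q v)"
proof
  fix i
  define Sp where "Sp = {w. p w \<noteq> 0}"
  define Sq where "Sq = {w. q w \<noteq> 0}"
  have fin: "finite Sp" "finite Sq" using assms by (auto simp: free_alg_simps Sp_def Sq_def)
  define W where "W = (\<lambda>(u, w). u @ w) ` (Sp \<times> Sq)"
  have W: "finite W" using fin by (simp add: W_def)
  define T where "T = {(w, t). w \<in> W \<and> t \<le> length w \<and> take t w \<in> Sp \<and> drop t w \<in> Sq}"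
  define G where "G = (\<lambda>(w, t). p (take t w) * q (drop t w) * sl2_word_act c w v i)"
  have [simp]: "take (length u) (u @ w) = u" "drop (length u) (u @ w) = w" for u w :: "gen list"
    by simp_all
  have "sl2_act c p (sl2_act c q v) i
        = (\<Sum>u\<in>Sp. p u * (\<Sum>x\<in>Sq. q x * sl2_word_act c u (sl2_word_act c x v) i))"
    unfolding sl2_act_def Sp_def Sq_def by (simp add: sl2_word_act_sum)
  also have "\<dots> = (\<Sum>(u, x)\<in>Sp \<times> Sq. p u * q x * sl2_word_act c (u @ x) v i)"
    by (simp add: sum.cartesian_product sum_distrib_left sl2_word_act_append mult.assoc)
  also have "\<dots> = (\<Sum>(w, t)\<in>T. G (w, t))"
    unfolding G_def T_def W_def
    by (rule sum.reindex_bij_witness[where j = "\<lambda>(u, x). (u @ x, length u)"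
          and i = "\<lambda>(w, t). (take t w, drop t w)"]) (auto simp del: take_append drop_append)
  also have "\<dots> = (\<Sum>(w, t)\<in>Sigma W (\<lambda>w. {..length w}). G (w, t))"
    by (rule sum.mono_neutral_left) (auto simp: T_def G_def Sp_def Sq_def W)
  also have "\<dots> = (\<Sum>w\<in>W. (\<Sum>t\<le>length w. p (take t w) * q (drop t w)) * sl2_word_act c w v i)"
    by (simp add: sum.Sigma[symmetric] G_def sum_distrib_right W)
  also have "\<dots> = sl2_act c (p \<otimes>\<^bsub>free_alg\<^esub> q) v i"
    unfolding free_alg_simps using conv_nonzero_subset[of p q]
    by (intro sl2_act_eq_sum[symmetric] W) (auto simp: W_def Sp_def Sq_def)
  finally show "sl2_act c (p \<otimes>\<^bsub>free_alg\<^esub> q) v i = sl2_act c p (sl2_act c q v) i" by simp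
qed

lemma lincomb_nonzero_subset:
  "{w. (\<Sum>j\<in>J. a j * p j w) \<noteq> (0::'k::semiring_0)} \<subseteq> (\<Union>j\<in>J. {w. p j w \<noteq> 0})"
  by (auto intro: ccontr simp: sum.neutral)

lemma lincomb_carrier:
  assumes "finite J" "\<And>j. j \<in> J \<Longrightarrow> p j \<in> carrier free_alg"
  shows "(\<lambda>w. \<Sum>j\<in>J. a j * p j w) \<in> carrier free_alg"
  using assms lincomb_nonzero_subset[where J = J and a = a and p = p]
  by (auto simp: free_alg_simps intro: finite_subset)

lemma sl2_act_lincomb:
  assumes "finite J" "\<And>j. j \<in> J \<Longrightarrow> p j \<in> carrier free_alg"
  shows "sl2_act c (\<lambda>w. \<Sum>j\<in>J. a j * p j w) v i = (\<Sum>j\<in>J. a j * sl2_act c (p j) v i)"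
proof -
  define S where "S = (\<Union>j\<in>J. {w. p j w \<noteq> 0})"
  have S: "finite S" using assms by (auto simp: S_def free_alg_simps)
  have "sl2_act c (\<lambda>w. \<Sum>j\<in>J. a j * p j w) v i
        = (\<Sum>w\<in>S. (\<Sum>j\<in>J. a j * p j w) * sl2_word_act c w v i)"
    using lincomb_nonzero_subset[where J = J and a = a and p = p] by (intro sl2_act_eq_sum S) (simp add: S_def)
  also have "\<dots> = (\<Sum>j\<in>J. a j * (\<Sum>w\<in>S. p j w * sl2_word_act c w v i))"
    by (simp add: sum_distrib_left sum_distrib_right mult.assoc sum.swap[of _ S])
  also have "\<dots> = (\<Sum>j\<in>J. a j * sl2_act c (p j) v i)"
    by (intro sum.cong refl arg_cong[where f = "(*) _"] sl2_act_eq_sum[symmetric] S)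
       (auto simp: S_def)
  finally show ?thesis .
qed

lemma sl2_rels_carrier: "(sl2_rels :: 'k::field ncpoly set) \<subseteq> carrier free_alg"
proof -
  interpret ring "free_alg :: 'k ncpoly ring" by (rule ring_free_alg)
  show ?thesis
    by (simp add: sl2_rels_def Let_def fa_gen_eq_fa_word fa_word_carrier ring_simprules)
qed

lemma sl2_act_rels:
  fixes c :: "'k::field"
  assumes "r \<in> sl2_rels"
  shows "sl2_act c r v i = 0"
proof -
  have gen: "fa_gen g \<in> carrier free_alg" "sl2_act c (fa_gen g) = sl2_gen_act c g" for g
    by (simp_all add: fa_gen_eq_fa_word fa_word_carrier sl2_act_fa_word fun_eq_iff)
  interpret ring "free_alg :: 'k ncpoly ring" by (rule ring_free_alg)
  show ?thesis
    using assms unfolding sl2_rels_def Let_def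
    by (auto simp: sl2_act_minus sl2_act_add sl2_act_mult gen)
       (auto simp: sl2_gen_act_def algebra_simps split: nat.split)
qed

lemma ideal_sl2_ideal: "ideal (sl2_ideal :: 'k::field ncpoly set) free_alg"
  unfolding sl2_ideal_def by (intro ring.genideal_ideal ring_free_alg sl2_rels_carrier)

lemma ring_hom_ring_rcos_sl2_ideal:
  "ring_hom_ring (free_alg :: 'k::field ncpoly ring) U_sl2 (a_r_coset free_alg sl2_ideal)"
  unfolding U_sl2_def by (rule ideal.rcos_ring_hom_ring[OF ideal_sl2_ideal])

definition sl2_ann :: "'k::field \<Rightarrow> (nat \<Rightarrow> 'k) set \<Rightarrow> 'k ncpoly set" where
  "sl2_ann c V = {p \<in> carrier free_alg. \<forall>v\<in>V. sl2_act c p v = (\<lambda>_. 0)}"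

lemma ideal_sl2_ann:
  fixes c :: "'k::field"
  assumes stable: "\<And>p v. p \<in> carrier free_alg \<Longrightarrow> v \<in> V \<Longrightarrow> sl2_act c p v \<in> V"
  shows "ideal (sl2_ann c V) free_alg"
proof -
  interpret R: ring "free_alg :: 'k::field ncpoly ring" by (rule ring_free_alg)
  show ?thesis
  proof (rule idealI[OF ring_free_alg])
    show "subgroup (sl2_ann c V) (add_monoid free_alg)"
    proof (rule R.add.subgroupI)
      have "\<zero>\<^bsub>free_alg\<^esub> \<in> sl2_ann c V"
        using R.zero_closed by (simp add: sl2_ann_def sl2_act_def free_alg_simps fun_eq_iff)
      then show "sl2_ann c V \<noteq> {}" by blast
    qed (auto simp: sl2_ann_def sl2_act_add sl2_act_a_inv a_inv_def[symmetric] fun_eq_iff)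
  next
    fix a x :: "'k ncpoly"
    assume "a \<in> sl2_ann c V" "x \<in> carrier free_alg"
    then show "x \<otimes>\<^bsub>free_alg\<^esub> a \<in> sl2_ann c V" "a \<otimes>\<^bsub>free_alg\<^esub> x \<in> sl2_ann c V"
      by (auto simp: sl2_ann_def sl2_act_mult sl2_act_zero_vec stable)
  qed
qed

lemma sl2_ideal_subset_sl2_ann:
  fixes c :: "'k::field"
  assumes "\<And>p v. p \<in> carrier free_alg \<Longrightarrow> v \<in> V \<Longrightarrow> sl2_act c p v \<in> V"
  shows "sl2_ideal \<subseteq> sl2_ann c V"
proof -
  interpret ring "free_alg :: 'k::field ncpoly ring" by (rule ring_free_alg)
  have "sl2_rels \<subseteq> sl2_ann c V"
    using sl2_rels_carrier
    by (auto simp: sl2_ann_def fun_eq_iff intro: sl2_act_rels)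
  with ideal_sl2_ann[OF assms] show ?thesis
    unfolding sl2_ideal_def by (rule genideal_minimal)
qed

section \<open>The primitive ideals \<open>P\<^sub>l\<close> and their intersection \<open>Q\<close>\<close>

definition L_space :: "nat \<Rightarrow> (nat \<Rightarrow> 'k::zero) set" where
  "L_space l = {v. \<forall>i>l. v i = 0}"

definition unit_vec :: "nat \<Rightarrow> nat \<Rightarrow> 'k::zero_neq_one" where
  "unit_vec j = (\<lambda>i. if i = j then 1 else 0)"

lemma sl2_act_L_space:
  assumes "v \<in> L_space l"
  shows "sl2_act (of_nat l) p v \<in> L_space l"
proof -
  have gen: "sl2_gen_act (of_nat l) g u \<in> L_space l" if "u \<in> L_space l" for g and u :: "nat \<Rightarrow> 'a"
    using that by (cases g) (auto simp: L_space_def sl2_gen_act_def less_Suc_eq split: nat.split)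
  have "sl2_word_act (of_nat l) w v \<in> L_space l" for w
    using assms by (induction w) (auto intro: gen)
  then show ?thesis
    by (auto simp: L_space_def sl2_act_def)
qed

lemma sl2_word_act_E_pow:
  "sl2_word_act c (replicate n gE) v i = pochhammer (of_nat (Suc i)) n * v (i + n)"
proof (induction n arbitrary: i)
  case (Suc n)
  then show ?case
    by (simp add: sl2_gen_act_def pochhammer_rec algebra_simps)
qed simp

lemma sl2_word_act_F_pow:
  "sl2_word_act c (replicate j gF) (unit_vec 0) = (\<lambda>i. (\<Prod>t<j. c - of_nat t) * unit_vec j i)"
proof (induction j)
  case (Suc j)
  then show ?case
    by (auto simp: sl2_gen_act_def unit_vec_def prod.lessThan_Suc mult.commute split: nat.split)
qed (simp add: unit_vec_def)

lemma E_pow_to_unit_vec_0: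
  fixes w :: "nat \<Rightarrow> 'k::field_char_0"
  assumes "w \<in> L_space l" "w \<noteq> (\<lambda>_. 0)"
  obtains d and D :: 'k where "D \<noteq> 0" "sl2_word_act c (replicate d gE) w = (\<lambda>i. D * unit_vec 0 i)"
proof -
  have fin: "finite {i. w i \<noteq> 0}"
    using assms(1) by (auto simp: L_space_def intro: finite_subset[of _ "{..l}"] leI)
  define d where "d = Max {i. w i \<noteq> 0}"
  have "w d \<noteq> 0"
    using fin assms(2) Max_in[of "{i. w i \<noteq> 0}"] by (auto simp: d_def)
  moreover have "w i = 0" if "i > d" for i
  proof (rule ccontr)
    assume "w i \<noteq> 0"
    then have "i \<le> d" by (simp add: d_def fin)
    with that show False by simp
  qed
  ultimately show ?thesis
    by (intro that[of "fact d * w d" d])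
       (auto simp: sl2_word_act_E_pow unit_vec_def pochhammer_fact[symmetric] fun_eq_iff)
qed

text \<open>\<open>F\<^sup>j E\<^sup>d\<close> sends a nonzero vector of \<open>L(l)\<close> to a nonzero multiple of \<open>x\<^sub>j\<close>, because the
  factors \<open>l - t\<close>, \<open>t < j \<le> l\<close>, are nonzero in characteristic zero.\<close>

lemma L_space_density:
  fixes w v :: "nat \<Rightarrow> 'k::field_char_0"
  assumes w: "w \<in> L_space l" "w \<noteq> (\<lambda>_. 0)" and v: "v \<in> L_space l"
  shows "\<exists>u\<in>carrier free_alg. sl2_act (of_nat l) u w = v"
proof -
  define c :: 'k where "c = of_nat l"
  obtain d and D :: 'k where D: "D \<noteq> 0" "sl2_word_act c (replicate d gE) w = (\<lambda>i. D * unit_vec 0 i)"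
    using E_pow_to_unit_vec_0[OF w] .
  define P where "P j = (\<Prod>t<j. c - of_nat t)" for j
  have P: "P j \<noteq> 0" if "j \<le> l" for j
    using that by (auto simp: P_def c_def)
  define word where "word j = replicate j gF @ replicate d gE" for j
  have word: "sl2_word_act c (word j) w = (\<lambda>i. D * P j * unit_vec j i)" for j
    by (simp add: word_def sl2_word_act_append D(2) sl2_word_act_scale sl2_word_act_F_pow P_def
          mult_ac)
  define u where "u = (\<lambda>x. \<Sum>j\<le>l. v j / (D * P j) * fa_word (word j) x)"
  have "sl2_act c u w i = v i" for i
  proof -
    have "sl2_act c u w i = (\<Sum>j\<le>l. v j / (D * P j) * sl2_act c (fa_word (word j)) w i)"
      unfolding u_def by (rule sl2_act_lincomb) (simp_all add: fa_word_carrier)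
    also have "\<dots> = (\<Sum>j\<le>l. v j / (D * P j) * (D * P j * unit_vec j i))"
      by (simp add: sl2_act_fa_word word)
    also have "\<dots> = (\<Sum>j\<le>l. if j = i then v i else 0)"
      using D(1) P by (intro sum.cong refl) (auto simp: unit_vec_def)
    also have "\<dots> = v i"
      using v by (auto simp: L_space_def)
    finally show ?thesis .
  qed
  moreover have "u \<in> carrier free_alg"
    unfolding u_def by (intro lincomb_carrier fa_word_carrier) simp
  ultimately show ?thesis
    by (auto simp: c_def)
qed

definition ann_L :: "nat \<Rightarrow> 'k::field ncpoly set" where
  "ann_L l = sl2_ann (of_nat l) (L_space l)"

definition ann_all :: "'k::field ncpoly set" where
  "ann_all = (\<Inter>l. ann_L l)"

lemma ideal_ann_L: "ideal (ann_L l) free_alg"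
  unfolding ann_L_def by (intro ideal_sl2_ann sl2_act_L_space)

lemma sl2_ideal_subset_ann_L: "sl2_ideal \<subseteq> ann_L l"
  unfolding ann_L_def by (intro sl2_ideal_subset_sl2_ann sl2_act_L_space)

lemma one_notin_ann_L: "\<one>\<^bsub>free_alg\<^esub> \<notin> (ann_L l :: 'k::field ncpoly set)"
proof -
  have "sl2_act (of_nat l) \<one>\<^bsub>free_alg\<^esub> (unit_vec 0) 0 = (1::'k)"
    by (simp add: free_alg_one_eq_fa_word sl2_act_fa_word unit_vec_def)
  moreover have "unit_vec 0 \<in> (L_space l :: (nat \<Rightarrow> 'k) set)"
    by (simp add: L_space_def unit_vec_def)
  ultimately show ?thesis
    by (force simp: ann_L_def sl2_ann_def)
qed

lemma ideal_ann_all: "ideal ann_all free_alg"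
  unfolding ann_all_def
  by (intro ring.i_Intersect[OF ring_free_alg]) (auto intro: ideal_ann_L)

lemma sl2_ideal_subset_ann_all: "sl2_ideal \<subseteq> ann_all"
  using sl2_ideal_subset_ann_L by (auto simp: ann_all_def)

lemma one_notin_ann_all: "\<one>\<^bsub>free_alg\<^esub> \<notin> ann_all"
  using one_notin_ann_L by (auto simp: ann_all_def)

lemma ann_L_prime:
  fixes p q :: "'k::field_char_0 ncpoly"
  assumes pq: "p \<in> carrier free_alg" "q \<in> carrier free_alg" "p \<notin> ann_L l" "q \<notin> ann_L l"
  shows "\<exists>u\<in>carrier free_alg. p \<otimes>\<^bsub>free_alg\<^esub> u \<otimes>\<^bsub>free_alg\<^esub> q \<notin> ann_L l"
proof -
  interpret ring "free_alg :: 'k ncpoly ring" by (rule ring_free_alg)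
  obtain v where v: "v \<in> L_space l" "sl2_act (of_nat l) p v \<noteq> (\<lambda>_. 0)"
    using pq by (auto simp: ann_L_def sl2_ann_def)
  obtain w where w: "w \<in> L_space l" "sl2_act (of_nat l) q w \<noteq> (\<lambda>_. 0)"
    using pq by (auto simp: ann_L_def sl2_ann_def)
  obtain u where u: "u \<in> carrier free_alg" "sl2_act (of_nat l) u (sl2_act (of_nat l) q w) = v"
    using L_space_density[OF sl2_act_L_space[OF w(1)] w(2) v(1)] by blast
  have "sl2_act (of_nat l) (p \<otimes>\<^bsub>free_alg\<^esub> u \<otimes>\<^bsub>free_alg\<^esub> q) w = sl2_act (of_nat l) p v"
    using pq u by (simp add: sl2_act_mult)
  then show ?thesis
    using u v w by (auto simp: ann_L_def sl2_ann_def)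
qed

definition is_poly_fun :: "('k::comm_ring_1 \<Rightarrow> 'k) \<Rightarrow> bool" where
  "is_poly_fun f \<longleftrightarrow> (\<exists>P. \<forall>x. f x = poly P x)"

lemma is_poly_fun_const: "is_poly_fun (\<lambda>_. a)"
  unfolding is_poly_fun_def by (intro exI[of _ "[:a:]"]) auto

lemma is_poly_fun_id: "is_poly_fun (\<lambda>x. x)"
  unfolding is_poly_fun_def by (intro exI[of _ "[:0, 1:]"]) auto

lemma is_poly_fun_add: "is_poly_fun f \<Longrightarrow> is_poly_fun g \<Longrightarrow> is_poly_fun (\<lambda>x. f x + g x)"
  unfolding is_poly_fun_def by (metis poly_add)

lemma is_poly_fun_diff: "is_poly_fun f \<Longrightarrow> is_poly_fun g \<Longrightarrow> is_poly_fun (\<lambda>x. f x - g x)"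
  unfolding is_poly_fun_def by (metis poly_diff)

lemma is_poly_fun_mult: "is_poly_fun f \<Longrightarrow> is_poly_fun g \<Longrightarrow> is_poly_fun (\<lambda>x. f x * g x)"
  unfolding is_poly_fun_def by (metis poly_mult)

lemma is_poly_fun_sum: "(\<And>j. j \<in> J \<Longrightarrow> is_poly_fun (f j)) \<Longrightarrow> is_poly_fun (\<lambda>x. \<Sum>j\<in>J. f j x)"
  by (induction J rule: infinite_finite_induct) (auto intro: is_poly_fun_const is_poly_fun_add)

lemma is_poly_fun_sl2_act: "is_poly_fun (\<lambda>c. sl2_act c p v i)"
proof -
  have "is_poly_fun (\<lambda>c. sl2_word_act c w v i)" for w i
  proof (induction w arbitrary: i)
    case (Cons g w)
    then show ?case
      by (cases g; cases i) (simp_all add: sl2_gen_act_def is_poly_fun_const is_poly_fun_id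
          is_poly_fun_mult is_poly_fun_diff)
  qed (simp add: is_poly_fun_const)
  then show ?thesis
    unfolding sl2_act_def by (intro is_poly_fun_sum is_poly_fun_mult is_poly_fun_const)
qed

lemma is_poly_fun_eventually_nonzero:
  fixes f :: "'k::field_char_0 \<Rightarrow> 'k"
  assumes "is_poly_fun f" "f a \<noteq> 0"
  shows "\<forall>\<^sub>F l in sequentially. f (of_nat l) \<noteq> 0"
proof -
  obtain P where P: "\<And>x. f x = poly P x" using assms(1) by (auto simp: is_poly_fun_def)
  moreover have "P \<noteq> 0"
    using assms(2) P by auto
  ultimately have "finite {x. f x = 0}"
    using poly_roots_finite[of P] by simp
  then have "finite (of_nat -` {x. f x = 0} :: nat set)"
    by (rule finite_vimageI) (simp add: inj_on_def)
  then show ?thesis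
    by (simp add: cofinite_eq_sequentially[symmetric] eventually_cofinite vimage_def)
qed

text \<open>Matrix coefficients of the action depend polynomially on the highest weight, so an
  element not annihilating some \<open>L(m)\<close> annihilates only finitely many \<open>L(l)\<close>.\<close>

lemma eventually_notin_ann_L:
  fixes p :: "'k::field_char_0 ncpoly"
  assumes "p \<notin> ann_all" "p \<in> carrier free_alg"
  shows "\<forall>\<^sub>F l in sequentially. p \<notin> ann_L l"
proof -
  obtain m v i where v: "v \<in> L_space m" "sl2_act (of_nat m) p v i \<noteq> 0"
    using assms by (auto simp: ann_all_def ann_L_def sl2_ann_def fun_eq_iff)
  have "\<forall>\<^sub>F l in sequentially. l \<ge> m \<and> sl2_act (of_nat l) p v i \<noteq> 0"
    using is_poly_fun_eventually_nonzero[OF is_poly_fun_sl2_act v(2)] eventually_ge_at_top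
    by (rule eventually_conj[rotated])
  then show ?thesis
  proof (rule eventually_mono)
    fix l assume "m \<le> l \<and> sl2_act (of_nat l) p v i \<noteq> 0"
    moreover have "v \<in> L_space l" if "m \<le> l"
      using v(1) that by (auto simp: L_space_def)
    ultimately show "p \<notin> ann_L l"
      by (auto simp: ann_L_def sl2_ann_def fun_eq_iff)
  qed
qed

lemma ann_all_prime:
  fixes p q :: "'k::field_char_0 ncpoly"
  assumes "p \<in> carrier free_alg" "q \<in> carrier free_alg" "p \<notin> ann_all" "q \<notin> ann_all"
  shows "\<exists>u\<in>carrier free_alg. p \<otimes>\<^bsub>free_alg\<^esub> u \<otimes>\<^bsub>free_alg\<^esub> q \<notin> ann_all"
proof -
  have "\<forall>\<^sub>F l in sequentially. p \<notin> ann_L l \<and> q \<notin> ann_L l"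
    using assms by (intro eventually_conj eventually_notin_ann_L)
  then obtain l where "p \<notin> ann_L l" "q \<notin> ann_L l"
    by (auto simp: eventually_sequentially)
  then obtain u where "u \<in> carrier free_alg" "p \<otimes>\<^bsub>free_alg\<^esub> u \<otimes>\<^bsub>free_alg\<^esub> q \<notin> ann_L l"
    using ann_L_prime[OF assms(1,2)] by blast
  then show ?thesis
    by (auto simp: ann_all_def)
qed

definition P_ideal :: "nat \<Rightarrow> 'k::field ncpoly set set" where
  "P_ideal l = a_r_coset free_alg sl2_ideal ` ann_L l"

definition Q_ideal :: "'k::field ncpoly set set" where
  "Q_ideal = a_r_coset free_alg sl2_ideal ` ann_all"

lemma P_ideal_in_spec: "P_ideal l \<in> spec (U_sl2 :: 'k::field_char_0 ncpoly set ring)"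
  unfolding P_ideal_def U_sl2_def
  by (intro ring.quot_image_in_spec ring_free_alg ideal_sl2_ideal ideal_ann_L
        sl2_ideal_subset_ann_L one_notin_ann_L ann_L_prime)

lemma Q_ideal_in_spec: "Q_ideal \<in> spec (U_sl2 :: 'k::field_char_0 ncpoly set ring)"
  unfolding Q_ideal_def U_sl2_def
  by (intro ring.quot_image_in_spec ring_free_alg ideal_sl2_ideal ideal_ann_all
        sl2_ideal_subset_ann_all one_notin_ann_all ann_all_prime)

lemma mem_P_ideal_iff:
  "p \<in> carrier free_alg \<Longrightarrow> sl2_ideal +>\<^bsub>free_alg\<^esub> p \<in> P_ideal l \<longleftrightarrow> p \<in> ann_L l"
  unfolding P_ideal_def
  by (rule ring.rcos_mem_image_iff[OF ring_free_alg ideal_sl2_ideal ideal_ann_L sl2_ideal_subset_ann_L])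

lemma mem_Q_ideal_iff:
  "p \<in> carrier free_alg \<Longrightarrow> sl2_ideal +>\<^bsub>free_alg\<^esub> p \<in> Q_ideal \<longleftrightarrow> p \<in> ann_all"
  unfolding Q_ideal_def
  by (rule ring.rcos_mem_image_iff[OF ring_free_alg ideal_sl2_ideal ideal_ann_all sl2_ideal_subset_ann_all])

lemma Q_ideal_eq_Inter_P_ideal: "Q_ideal = (\<Inter>l. P_ideal l)"
proof
  show "Q_ideal \<subseteq> (\<Inter>l. P_ideal l)"
    by (auto simp: Q_ideal_def P_ideal_def ann_all_def)
next
  show "(\<Inter>l. P_ideal l) \<subseteq> Q_ideal"
  proof
    fix x assume x: "x \<in> (\<Inter>l. P_ideal l)"
    then obtain p where p: "p \<in> ann_L 0" "x = sl2_ideal +>\<^bsub>free_alg\<^esub> p"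
      by (auto simp: P_ideal_def)
    then have "p \<in> carrier free_alg"
      by (auto simp: ann_L_def sl2_ann_def)
    then show "x \<in> Q_ideal"
      using x p(2) by (simp add: mem_P_ideal_iff mem_Q_ideal_iff ann_all_def)
  qed
qed

section \<open>The subalgebra \<open>R = k[E]\<close>\<close>

definition E_only :: "'k::zero ncpoly \<Rightarrow> bool" where
  "E_only p \<longleftrightarrow> (\<forall>w. p w \<noteq> 0 \<longrightarrow> set w \<subseteq> {gE})"

definition E_polys :: "'k::field ncpoly set" where
  "E_polys = {p \<in> carrier free_alg. E_only p}"

lemma kE_sub_eq:
  "(kE_sub :: 'k::field ncpoly set ring) = U_sl2\<lparr>carrier := a_r_coset free_alg sl2_ideal ` E_polys\<rparr>"
proof -
  have "{x. \<exists>p\<in>carrier free_alg. (\<forall>w. p w \<noteq> 0 \<longrightarrow> set w \<subseteq> {gE}) \<and> x = sl2_ideal +>\<^bsub>free_alg\<^esub> p}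
        = a_r_coset free_alg sl2_ideal ` (E_polys :: 'k ncpoly set)"
    by (auto simp: E_polys_def E_only_def)
  then show ?thesis
    by (simp add: kE_sub_def)
qed

lemma kE_sub_simps:
  "carrier (kE_sub :: 'k::field ncpoly set ring) = a_r_coset free_alg sl2_ideal ` E_polys"
  "x \<otimes>\<^bsub>(kE_sub :: 'k ncpoly set ring)\<^esub> y = x \<otimes>\<^bsub>U_sl2\<^esub> y"
  "\<one>\<^bsub>(kE_sub :: 'k ncpoly set ring)\<^esub> = sl2_ideal +>\<^bsub>free_alg\<^esub> \<one>\<^bsub>free_alg\<^esub>"
  "\<zero>\<^bsub>(kE_sub :: 'k ncpoly set ring)\<^esub> = sl2_ideal"
  by (simp_all add: kE_sub_eq U_sl2_def FactRing_def)

lemma set_subset_singleton_imp_replicate: "set w \<subseteq> {a} \<Longrightarrow> w = replicate (length w) a"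
  by (metis replicate_length_same singletonD subsetD)

lemma E_only_replicate: "E_only p \<Longrightarrow> p w \<noteq> 0 \<Longrightarrow> w = replicate (length w) gE"
  by (auto simp: E_only_def intro: set_subset_singleton_imp_replicate)

lemma E_only_mult:
  fixes p q :: "'k::field ncpoly"
  assumes "E_only p" "E_only q"
  shows "E_only (p \<otimes>\<^bsub>free_alg\<^esub> q)"
  unfolding E_only_def
proof (intro allI impI)
  fix w assume "(p \<otimes>\<^bsub>free_alg\<^esub> q) w \<noteq> 0"
  then obtain i where "p (take i w) * q (drop i w) \<noteq> 0"
    unfolding free_alg_simps by (metis (mono_tags, lifting) sum.neutral)
  then have "set (take i w) \<subseteq> {gE}" "set (drop i w) \<subseteq> {gE}"
    using assms by (auto simp: E_only_def)
  then show "set w \<subseteq> {gE}"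
    by (metis Un_subset_iff append_take_drop_id set_append)
qed

lemma E_only_mult_commute:
  fixes p q :: "'k::field ncpoly"
  assumes "E_only p" "E_only q"
  shows "p \<otimes>\<^bsub>free_alg\<^esub> q = q \<otimes>\<^bsub>free_alg\<^esub> p"
proof
  fix w
  show "(p \<otimes>\<^bsub>free_alg\<^esub> q) w = (q \<otimes>\<^bsub>free_alg\<^esub> p) w"
  proof (cases "set w \<subseteq> {gE}")
    case True
    define n where "n = length w"
    have w: "w = replicate n gE"
      using True by (simp add: n_def set_subset_singleton_imp_replicate)
    have conv: "(f \<otimes>\<^bsub>free_alg\<^esub> g) w = (\<Sum>i\<le>n. f (replicate i gE) * g (replicate (n - i) gE))"
      for f g :: "'k ncpoly"
      unfolding free_alg_simps w by (intro sum.cong) (auto simp: min_def)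
    show ?thesis
      unfolding conv by (subst sum.atLeastAtMost_rev[of _ 0 n, simplified atLeast0AtMost])
        (auto simp: mult.commute intro: sum.cong)
  next
    case False
    then have split: "\<not> (set (take i w) \<subseteq> {gE} \<and> set (drop i w) \<subseteq> {gE})" for i
      by (metis Un_subset_iff append_take_drop_id set_append)
    have zero: "p (take i w) * q (drop i w) = 0" "q (take i w) * p (drop i w) = 0" for i
      using split[of i] assms by (auto simp: E_only_def)
    show ?thesis
      by (simp add: free_alg_simps zero)
  qed
qed

lemma subring_E_polys: "subring (E_polys :: 'k::field ncpoly set) free_alg"
proof -
  interpret ring "free_alg :: 'k ncpoly ring" by (rule ring_free_alg)
  show ?thesis
  proof (rule subringI)
    show "\<one>\<^bsub>free_alg\<^esub> \<in> (E_polys :: 'k ncpoly set)"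
      by (simp add: E_polys_def E_only_def free_alg_simps)
  next
    fix h :: "'k ncpoly"
    assume "h \<in> E_polys"
    then show "\<ominus>\<^bsub>free_alg\<^esub> h \<in> E_polys"
      using a_inv_closed[of h] by (auto simp: E_polys_def E_only_def free_alg_a_inv)
  next
    fix h1 h2 :: "'k ncpoly"
    assume "h1 \<in> E_polys" "h2 \<in> E_polys"
    then show "h1 \<otimes>\<^bsub>free_alg\<^esub> h2 \<in> E_polys"
      by (auto simp: E_polys_def E_only_mult)
    have "E_only (h1 \<oplus>\<^bsub>free_alg\<^esub> h2)"
      unfolding E_only_def free_alg_simps(5)
    proof (intro allI impI)
      fix w assume "h1 w + h2 w \<noteq> 0"
      then have "h1 w \<noteq> 0 \<or> h2 w \<noteq> 0" by auto
      then show "set w \<subseteq> {gE}"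
        using \<open>h1 \<in> E_polys\<close> \<open>h2 \<in> E_polys\<close> by (auto simp: E_polys_def E_only_def)
    qed
    then show "h1 \<oplus>\<^bsub>free_alg\<^esub> h2 \<in> E_polys"
      using \<open>h1 \<in> E_polys\<close> \<open>h2 \<in> E_polys\<close> by (auto simp: E_polys_def)
  qed (auto simp: E_polys_def)
qed

lemma cring_kE_sub: "cring (kE_sub :: 'k::field ncpoly set ring)"
proof -
  interpret h: ring_hom_ring "free_alg :: 'k ncpoly ring" U_sl2 "a_r_coset free_alg sl2_ideal"
    unfolding U_sl2_def by (rule ideal.rcos_ring_hom_ring[OF ideal_sl2_ideal])
  let ?H = "a_r_coset free_alg sl2_ideal ` (E_polys :: 'k ncpoly set)"
  have "subcring ?H U_sl2"
  proof (rule h.S.subcringI)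
    show "subring ?H U_sl2"
      by (rule h.img_is_subring[OF subring_E_polys])
  next
    fix x y assume "x \<in> ?H" "y \<in> ?H"
    then obtain p q where p: "p \<in> E_polys" "x = sl2_ideal +>\<^bsub>free_alg\<^esub> p"
      and q: "q \<in> E_polys" "y = sl2_ideal +>\<^bsub>free_alg\<^esub> q"
      by blast
    have "x \<otimes>\<^bsub>U_sl2\<^esub> y = sl2_ideal +>\<^bsub>free_alg\<^esub> (p \<otimes>\<^bsub>free_alg\<^esub> q)"
      using p q by (simp add: E_polys_def h.hom_mult)
    also have "p \<otimes>\<^bsub>free_alg\<^esub> q = q \<otimes>\<^bsub>free_alg\<^esub> p"
      using p q by (simp add: E_polys_def E_only_mult_commute)
    also have "sl2_ideal +>\<^bsub>free_alg\<^esub> (q \<otimes>\<^bsub>free_alg\<^esub> p) = y \<otimes>\<^bsub>U_sl2\<^esub> x"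
      using p q by (simp add: E_polys_def h.hom_mult)
    finally show "x \<otimes>\<^bsub>U_sl2\<^esub> y = y \<otimes>\<^bsub>U_sl2\<^esub> x" .
  qed
  then show ?thesis
    unfolding kE_sub_eq using h.S.subcring_iff subringE(1)[OF h.img_is_subring[OF subring_E_polys]]
    by blast
qed

definition E_degree :: "'k::zero ncpoly \<Rightarrow> nat" where
  "E_degree p = Max (length ` {w. p w \<noteq> 0})"

lemma E_degree_ge:
  assumes "p \<in> carrier free_alg" "p w \<noteq> 0"
  shows "length w \<le> E_degree p"
  using assms unfolding E_degree_def free_alg_simps by (intro Max_ge) auto

lemma E_polys_coeff_above_degree:
  assumes "p \<in> carrier free_alg" "E_degree p < n"
  shows "p (replicate n gE) = 0"
  using E_degree_ge[OF assms(1), of "replicate n gE"] assms(2) by fastforce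

lemma E_polys_lead_coeff_nonzero:
  assumes "p \<in> E_polys" "p \<noteq> (\<lambda>_. 0)"
  shows "p (replicate (E_degree p) gE) \<noteq> 0"
proof -
  have "E_degree p \<in> length ` {w. p w \<noteq> 0}"
    using assms unfolding E_degree_def E_polys_def free_alg_simps by (intro Max_in) auto
  then obtain w where "p w \<noteq> 0" "length w = E_degree p" by auto
  moreover have "w = replicate (length w) gE"
    using assms(1) \<open>p w \<noteq> 0\<close> by (auto simp: E_polys_def intro: E_only_replicate)
  ultimately show ?thesis by metis
qed

lemma E_polys_mult_lead_coeff:
  fixes p q :: "'k::field ncpoly"
  assumes "p \<in> E_polys" "q \<in> E_polys"
  shows "(p \<otimes>\<^bsub>free_alg\<^esub> q) (replicate (E_degree p + E_degree q) gE)
         = p (replicate (E_degree p) gE) * q (replicate (E_degree q) gE)"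
proof -
  define a b where "a = E_degree p" and "b = E_degree q"
  have "(p \<otimes>\<^bsub>free_alg\<^esub> q) (replicate (a + b) gE)
        = (\<Sum>i\<le>a + b. p (replicate i gE) * q (replicate (a + b - i) gE))"
    unfolding free_alg_simps by (intro sum.cong) (auto simp: min_def)
  also have "\<dots> = (\<Sum>i\<le>a + b. if i = a then p (replicate a gE) * q (replicate b gE) else 0)"
  proof (intro sum.cong refl)
    fix i
    have "p (replicate i gE) = 0" if "a < i"
      using assms(1) that E_polys_coeff_above_degree by (auto simp: E_polys_def a_def)
    moreover have "q (replicate (a + b - i) gE) = 0" if "i < a"
      using assms(2) that E_polys_coeff_above_degree[of q "a + b - i"] by (auto simp: E_polys_def b_def)
    ultimately show "p (replicate i gE) * q (replicate (a + b - i) gE)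
                     = (if i = a then p (replicate a gE) * q (replicate b gE) else 0)"
      by (cases i a rule: linorder_cases) auto
  qed
  finally show ?thesis
    by (simp add: a_def b_def)
qed

lemma E_polys_mult_eq_zero:
  fixes p q :: "'k::field ncpoly"
  assumes "p \<in> E_polys" "q \<in> E_polys" "p \<otimes>\<^bsub>free_alg\<^esub> q = (\<lambda>_. 0)"
  shows "p = (\<lambda>_. 0) \<or> q = (\<lambda>_. 0)"
  using E_polys_mult_lead_coeff[OF assms(1,2)] E_polys_lead_coeff_nonzero assms by force

text \<open>The top term of a nonzero polynomial of degree \<open>m\<close> in \<open>E\<close> maps \<open>x\<^sub>m \<in> L(m)\<close> to a
  nonzero multiple of \<open>x\<^sub>0\<close>, and the other terms kill \<open>x\<^sub>m\<close> at coordinate 0.\<close>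

lemma E_polys_notin_ann_L:
  fixes p :: "'k::field_char_0 ncpoly"
  assumes "p \<in> E_polys" "p \<noteq> (\<lambda>_. 0)"
  shows "p \<notin> ann_L (E_degree p)"
proof
  define m where "m = E_degree p"
  assume "p \<in> ann_L (E_degree p)"
  moreover have "unit_vec m \<in> (L_space m :: (nat \<Rightarrow> 'k) set)"
    by (simp add: L_space_def unit_vec_def)
  ultimately have "sl2_act (of_nat m) p (unit_vec m) 0 = 0"
    by (auto simp: ann_L_def sl2_ann_def m_def)
  moreover have "sl2_act (of_nat m) p (unit_vec m) 0 = p (replicate m gE) * fact m"
  proof -
    have E_pow: "sl2_word_act (of_nat m) w (unit_vec m) 0 = (if w = replicate m gE then fact m else 0)"
      if "p w \<noteq> 0" for w
    proof -
      have "w = replicate (length w) gE"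
        using assms(1) that by (auto simp: E_polys_def intro: E_only_replicate)
      then obtain n where "w = replicate n gE" by blast
      then show ?thesis
        by (simp add: sl2_word_act_E_pow unit_vec_def pochhammer_fact[symmetric])
    qed
    have "sl2_act (of_nat m) p (unit_vec m) 0
          = (\<Sum>w | p w \<noteq> 0. if w = replicate m gE then p w * fact m else 0)"
      unfolding sl2_act_def by (intro sum.cong refl) (simp add: E_pow)
    also have "\<dots> = p (replicate m gE) * fact m"
      using assms E_polys_lead_coeff_nonzero[OF assms] by (simp add: E_polys_def free_alg_simps m_def)
    finally show ?thesis .
  qed
  ultimately show False
    using E_polys_lead_coeff_nonzero[OF assms] by (simp add: m_def)
qed

lemma rcos_E_polys_eq_sl2_ideal_iff:
  fixes p :: "'k::field_char_0 ncpoly"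
  assumes "p \<in> E_polys"
  shows "sl2_ideal +>\<^bsub>free_alg\<^esub> p = sl2_ideal \<longleftrightarrow> p = (\<lambda>_. 0)"
proof
  assume "sl2_ideal +>\<^bsub>free_alg\<^esub> p = sl2_ideal"
  then have "p \<in> ann_all"
    using ideal.rcos_const_imp_mem[OF ideal_sl2_ideal] sl2_ideal_subset_ann_all assms
    by (auto simp: E_polys_def)
  then show "p = (\<lambda>_. 0)"
    using E_polys_notin_ann_L[OF assms] by (auto simp: ann_all_def)
next
  assume "p = (\<lambda>_. 0)"
  then have "p \<in> sl2_ideal"
    using additive_subgroup.zero_closed[OF ideal.axioms(1)[OF ideal_sl2_ideal]]
    by (simp add: free_alg_simps)
  then show "sl2_ideal +>\<^bsub>free_alg\<^esub> p = sl2_ideal"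
    by (rule ring.a_rcos_zero[OF ring_free_alg ideal_sl2_ideal])
qed

lemma fa_word_E_pow_in_E_polys: "fa_word (replicate n gE) \<in> E_polys"
  using fa_word_carrier[of "replicate n gE"]
  by (auto simp: E_polys_def E_only_def fa_word_def set_replicate_conv_if)

lemma U_E_pow:
  "U_E [^]\<^bsub>(kE_sub :: 'k::field ncpoly set ring)\<^esub> n = sl2_ideal +>\<^bsub>free_alg\<^esub> fa_word (replicate n gE)"
proof (induction n)
  case 0
  then show ?case by (simp add: kE_sub_simps free_alg_one_eq_fa_word)
next
  case (Suc n)
  interpret h: ring_hom_ring "free_alg :: 'k ncpoly ring" U_sl2 "a_r_coset free_alg sl2_ideal"
    by (rule ring_hom_ring_rcos_sl2_ideal)
  show ?case
    using Suc.IH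
    by (simp add: kE_sub_simps U_E_def fa_gen_eq_fa_word fa_word_carrier fa_word_mult
        h.hom_mult[symmetric] replicate_append_same)
qed

lemma U_E_carrier: "U_E \<in> carrier (kE_sub :: 'k::field ncpoly set ring)"
  unfolding U_E_def fa_gen_eq_fa_word kE_sub_simps
  using fa_word_E_pow_in_E_polys[of 1] by (intro imageI) simp

lemma U_E_nonzero: "U_E \<noteq> \<zero>\<^bsub>(kE_sub :: 'k::field_char_0 ncpoly set ring)\<^esub>"
  using rcos_E_polys_eq_sl2_ideal_iff[OF fa_word_E_pow_in_E_polys[of 1], where 'k = 'k] fa_word_nonzero
  by (simp add: U_E_def fa_gen_eq_fa_word kE_sub_simps)

lemma domain_kE_sub: "domain (kE_sub :: 'k::field_char_0 ncpoly set ring)"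
proof -
  interpret h: ring_hom_ring "free_alg :: 'k ncpoly ring" U_sl2 "a_r_coset free_alg sl2_ideal"
    by (rule ring_hom_ring_rcos_sl2_ideal)
  have "\<one>\<^bsub>(kE_sub :: 'k ncpoly set ring)\<^esub> \<noteq> \<zero>\<^bsub>kE_sub\<^esub>"
    using rcos_E_polys_eq_sl2_ideal_iff[OF fa_word_E_pow_in_E_polys[of 0], where 'k = 'k] fa_word_nonzero
    by (simp add: kE_sub_simps free_alg_one_eq_fa_word)
  moreover have "a = \<zero>\<^bsub>kE_sub\<^esub> \<or> b = \<zero>\<^bsub>kE_sub\<^esub>"
    if ab: "a \<otimes>\<^bsub>kE_sub\<^esub> b = \<zero>\<^bsub>kE_sub\<^esub>"
      and carr: "a \<in> carrier kE_sub" "b \<in> carrier (kE_sub :: 'k ncpoly set ring)" for a b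
  proof -
    obtain p q where p: "p \<in> E_polys" "a = sl2_ideal +>\<^bsub>free_alg\<^esub> p"
      and q: "q \<in> E_polys" "b = sl2_ideal +>\<^bsub>free_alg\<^esub> q"
      using carr by (auto simp: kE_sub_simps)
    have pq: "p \<otimes>\<^bsub>free_alg\<^esub> q \<in> E_polys"
      using subringE(6)[OF subring_E_polys p(1) q(1)] .
    have "sl2_ideal +>\<^bsub>free_alg\<^esub> (p \<otimes>\<^bsub>free_alg\<^esub> q) = sl2_ideal"
      using ab p q by (simp add: kE_sub_simps E_polys_def h.hom_mult)
    then have "p = (\<lambda>_. 0) \<or> q = (\<lambda>_. 0)"
      using rcos_E_polys_eq_sl2_ideal_iff[OF pq] E_polys_mult_eq_zero[OF p(1) q(1)] by blast
    then show ?thesis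
      using rcos_E_polys_eq_sl2_ideal_iff p q by (auto simp: kE_sub_simps)
  qed
  ultimately show ?thesis
    by (intro domain.intro cring_kE_sub domain_axioms.intro)
qed

lemma U_E_pow_in_P_ideal: "U_E [^]\<^bsub>kE_sub\<^esub> Suc l \<in> (P_ideal l :: 'k::field ncpoly set set)"
proof -
  have "fa_word (replicate (Suc l) gE) \<in> (ann_L l :: 'k ncpoly set)"
    by (auto simp: ann_L_def sl2_ann_def sl2_act_fa_word sl2_word_act_E_pow L_space_def fa_word_carrier
        simp del: replicate_Suc)
  then show ?thesis
    unfolding U_E_pow by (simp add: mem_P_ideal_iff fa_word_carrier del: replicate_Suc)
qed

lemma Q_ideal_Int_kE_sub:
  "Q_ideal \<inter> carrier kE_sub \<subseteq> {\<zero>\<^bsub>(kE_sub :: 'k::field_char_0 ncpoly set ring)\<^esub>}"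
proof
  fix x :: "'k ncpoly set"
  assume "x \<in> Q_ideal \<inter> carrier kE_sub"
  then obtain p where p: "p \<in> E_polys" "x = sl2_ideal +>\<^bsub>free_alg\<^esub> p" "x \<in> Q_ideal"
    by (auto simp: kE_sub_simps)
  then have "p \<in> ann_all"
    using mem_Q_ideal_iff by (auto simp: E_polys_def)
  then have "p = (\<lambda>_. 0)"
    using E_polys_notin_ann_L[OF p(1)] by (auto simp: ann_all_def)
  then show "x \<in> {\<zero>\<^bsub>kE_sub\<^esub>}"
    using rcos_E_polys_eq_sl2_ideal_iff[OF p(1)] p(2) by (simp add: kE_sub_simps)
qed

lemma zero_in_corr_r_Q_ideal:
  "{\<zero>\<^bsub>kE_sub\<^esub>} \<in> corr_r U_sl2 kE_sub (Q_ideal :: 'k::field_char_0 ncpoly set set)"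
proof -
  have "{\<zero>\<^bsub>kE_sub\<^esub>} \<in> spec (kE_sub :: 'k ncpoly set ring)"
    using domain.zeroprimeideal[OF domain_kE_sub] spec_iff_primeideal[OF cring_kE_sub] by blast
  moreover have "Q' = {\<zero>\<^bsub>kE_sub\<^esub>}"
    if "Q' \<in> spec (kE_sub :: 'k ncpoly set ring)" "Q' \<subseteq> {\<zero>\<^bsub>kE_sub\<^esub>}" for Q'
  proof -
    have "ideal Q' (kE_sub :: 'k ncpoly set ring)"
      using that(1) by (simp add: spec_def)
    then have "\<zero>\<^bsub>kE_sub\<^esub> \<in> Q'"
      by (rule additive_subgroup.zero_closed[OF ideal.axioms(1)])
    with that(2) show ?thesis by blast
  qed
  ultimately show ?thesis
    using Q_ideal_Int_kE_sub unfolding corr_r_def by blast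
qed

lemma P_ideal_in_corr_preim:
  "P_ideal l \<in> corr_preim (U_sl2 :: 'k::field_char_0 ncpoly set ring) kE_sub
     (zar_V kE_sub {r \<otimes>\<^bsub>kE_sub\<^esub> U_E | r. r \<in> carrier kE_sub})"
proof -
  interpret R: cring "kE_sub :: 'k ncpoly set ring" by (rule cring_kE_sub)
  have "Q' \<in> zar_V kE_sub {r \<otimes>\<^bsub>kE_sub\<^esub> U_E | r. r \<in> carrier kE_sub}"
    if Q': "Q' \<in> corr_r U_sl2 kE_sub (P_ideal l)" for Q' :: "'k ncpoly set set"
  proof -
    have spec: "Q' \<in> spec (kE_sub :: 'k ncpoly set ring)"
      and sub: "P_ideal l \<inter> carrier kE_sub \<subseteq> Q'"
      using Q' by (simp_all add: corr_r_def)
    have prime: "primeideal Q' kE_sub"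
      using spec spec_iff_primeideal[OF cring_kE_sub] by blast
    have "U_E [^]\<^bsub>kE_sub\<^esub> Suc l \<in> Q'"
      using sub U_E_pow_in_P_ideal[of l] R.nat_pow_closed[OF U_E_carrier, of "Suc l"] by blast
    then have "U_E \<in> Q'"
      by (rule primeideal.pow_mem_imp_mem[OF prime U_E_carrier])
    then have "{r \<otimes>\<^bsub>kE_sub\<^esub> U_E | r. r \<in> carrier kE_sub} \<subseteq> Q'"
      using ideal.I_l_closed[OF primeideal.axioms(1)[OF prime]] by blast
    with spec show ?thesis
      by (simp add: zar_V_def)
  qed
  then show ?thesis
    using P_ideal_in_spec by (auto simp: corr_preim_def)
qed

lemma Q_ideal_notin_corr_preim:
  "Q_ideal \<notin> corr_preim (U_sl2 :: 'k::field_char_0 ncpoly set ring) kE_sub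
     (zar_V kE_sub {r \<otimes>\<^bsub>kE_sub\<^esub> U_E | r. r \<in> carrier kE_sub})"
proof
  interpret R: cring "kE_sub :: 'k ncpoly set ring" by (rule cring_kE_sub)
  let ?EI = "{r \<otimes>\<^bsub>kE_sub\<^esub> U_E | r. r \<in> carrier (kE_sub :: 'k ncpoly set ring)}"
  assume "Q_ideal \<in> corr_preim (U_sl2 :: 'k ncpoly set ring) kE_sub (zar_V kE_sub ?EI)"
  then have "?EI \<subseteq> {\<zero>\<^bsub>kE_sub\<^esub>}"
    using zero_in_corr_r_Q_ideal unfolding corr_preim_def zar_V_def by blast
  moreover have "\<one>\<^bsub>kE_sub\<^esub> \<otimes>\<^bsub>kE_sub\<^esub> U_E \<in> ?EI"
    using R.one_closed by blast
  ultimately show False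
    using U_E_nonzero[where 'k = 'k] R.l_one[OF U_E_carrier] by auto
qed

theorem mainTheorem5:
  shows "\<not> corr_continuous (U_sl2 :: (gen list \<Rightarrow> 'k::field_char_0) set ring) kE_sub \<and>
         \<not> spec_closed (U_sl2 :: (gen list \<Rightarrow> 'k::field_char_0) set ring)
             (corr_preim (U_sl2 :: (gen list \<Rightarrow> 'k) set ring) kE_sub
                (zar_V (kE_sub :: (gen list \<Rightarrow> 'k) set ring)
                   {r \<otimes>\<^bsub>(kE_sub :: (gen list \<Rightarrow> 'k) set ring)\<^esub> U_E | r. r \<in> carrier kE_sub}))"
proof -
  interpret R: cring "kE_sub :: 'k ncpoly set ring" by (rule cring_kE_sub)
  let ?EI = "{r \<otimes>\<^bsub>kE_sub\<^esub> U_E | r. r \<in> carrier (kE_sub :: 'k ncpoly set ring)}"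
  have "\<not> spec_closed U_sl2 (corr_preim (U_sl2 :: 'k ncpoly set ring) kE_sub (zar_V kE_sub ?EI))"
    by (rule not_spec_closed_if_Inter_notin[where P = P_ideal])
       (simp_all add: P_ideal_in_corr_preim Q_ideal_eq_Inter_P_ideal[symmetric] Q_ideal_in_spec
          Q_ideal_notin_corr_preim)
  moreover have "?EI \<subseteq> carrier kE_sub"
    using R.m_closed[OF _ U_E_carrier] by blast
  then have "spec_closed kE_sub (zar_V kE_sub ?EI)"
    unfolding spec_closed_def by (intro exI[of _ ?EI]) simp
  ultimately show ?thesis
    unfolding corr_continuous_def by blast
qed

end
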